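(* Let $\beta>0$, $k,\alpha,\epsilon>0$ be fixed, and let $N=N(n)$ be positive integers with $(3\alpha+21k/2+10+\epsilon)\log n\le N\le n^\alpha$. Let $p_n$ be a prime with $9n^{2k+2}\le p_n\le 2(2+\alpha+2k)Nn^{2k+2}\log n$. Let $J,B,C$ be standard normal random variables and set $\widetilde J=\lfloor 2^N e^{\beta J/\sqrt n}\rfloor$, $\widetilde B=\lfloor 2^N e^{B}\rfloor$, $\widetilde C=\lfloor 2^Ne^{C}\rfloor$. Then for every $A\in\{\widetilde J,\widetilde B,\widetilde C\}$, $$\max_{0\le \ell\le p_n-1}\big|\mathbb{P}(A\equiv \ell \bmod p_n)-p_n^{-1}\big|=O\big(N^{-1}n^{-5k-4}\big)$$ as $n\to\infty$.
   Context: $\log$ is base 2. The implicit constant in $O(\cdot)$ may depend on $\beta,k,\alpha,\epsilon$ but not on $n$, $N$, or the choice of $p_n$ in the stated range. *)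

theory Defs
  imports "HOL-Probability.Probability" "HOL-Computational_Algebra.Primes"
begin

definition std_normal :: "real measure" where
  "std_normal = density lborel std_normal_density"

definition residue_prob :: "real \<Rightarrow> nat \<Rightarrow> nat \<Rightarrow> nat \<Rightarrow> real" where
  "residue_prob c N p l =
     measure std_normal {x. \<lfloor>2 ^ N * exp (c * x)\<rfloor> mod int p = int l}"

end

theory Submission
  imports Defs "HOL-Real_Asymp.Real_Asymp"
begin

text \<open>Write X = 2^N exp(c Z) with Z standard normal. On (0, \<infinity>) the distribution function of X
  has a density that increases up to the mode 2^N exp(-c^2) and decreases afterwards, with maximum
  B = exp(c^2/2) / (sqrt(2 pi) c 2^N). Hence the point probabilities g m = P(floor X = m) are at
  most B and unimodal, so the sequence g has total variation at most 5 B. Comparing g (l + j p)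
  with the mean of g over the block [j p, j p + p) then shows that P(floor X = l mod p) is within
  5 B of 1/p, for every modulus p. For c = beta/sqrt n or c = 1 we have B = O(sqrt n / 2^N), and
  the lower bound on N gives 2^N \<ge> sqrt n N n^(5k+4).\<close>

lemma abs_diff_le_block_variation:
  fixes g :: "nat \<Rightarrow> real"
  assumes "x \<in> {s..<s+p}" "y \<in> {s..<s+p}"
  shows "\<bar>g x - g y\<bar> \<le> (\<Sum>i=s..<s+p. \<bar>g (Suc i) - g i\<bar>)"
proof -
  have ordered: "\<bar>g b - g a\<bar> \<le> (\<Sum>i=s..<s+p. \<bar>g (Suc i) - g i\<bar>)"
    if "a \<le> b" "a \<in> {s..<s+p}" "b \<in> {s..<s+p}" for a b
  proof -
    have "\<bar>g b - g a\<bar> = \<bar>\<Sum>i=a..<b. g (Suc i) - g i\<bar>"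
      using sum_Suc_diff'[OF \<open>a \<le> b\<close>, of g] by simp
    also have "\<dots> \<le> (\<Sum>i=a..<b. \<bar>g (Suc i) - g i\<bar>)" by (rule sum_abs)
    also have "\<dots> \<le> (\<Sum>i=s..<s+p. \<bar>g (Suc i) - g i\<bar>)" by (rule sum_mono2) (use that in auto)
    finally show ?thesis .
  qed
  show ?thesis
    using ordered[of x y] ordered[of y x] assms by (cases "x \<le> y") (auto simp: abs_minus_commute)
qed

lemma residue_class_suminf_deviation:
  fixes g :: "nat \<Rightarrow> real" and p l :: nat
  assumes nonneg: "\<And>m. 0 \<le> g m" and sums_one: "g sums 1"
    and var_summable: "summable (\<lambda>i. \<bar>g (Suc i) - g i\<bar>)"
    and var_le: "(\<Sum>i. \<bar>g (Suc i) - g i\<bar>) \<le> V"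
    and "l < p"
  shows "summable (\<lambda>j. g (l + j * p))"
    and "\<bar>(\<Sum>j. g (l + j * p)) - 1 / p\<bar> \<le> V"
proof -
  have "p > 0" using \<open>l < p\<close> by simp
  define block where "block j = (\<Sum>i = j*p..<j*p+p. g i)" for j
  define block_var where "block_var j = (\<Sum>i = j*p..<j*p+p. \<bar>g (Suc i) - g i\<bar>)" for j
  have block_sums: "block sums 1"
    unfolding block_def by (rule sums_group[OF sums_one \<open>p > 0\<close>])
  have block_var_sums: "block_var sums (\<Sum>i. \<bar>g (Suc i) - g i\<bar>)"
    unfolding block_var_def by (rule sums_group[OF summable_sums[OF var_summable] \<open>p > 0\<close>])
  have "g (l + j * p) \<le> block j" for j
    unfolding block_def using \<open>l < p\<close> nonneg
    by (intro member_le_sum) (auto simp: add.commute)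
  then show summable: "summable (\<lambda>j. g (l + j * p))"
    using nonneg summable_comparison_test[of "\<lambda>j. g (l + j * p)" block] sums_summable[OF block_sums]
    by simp
  define err where "err j = real p * g (l + j * p) - block j" for j
  have err_sums: "err sums (real p * (\<Sum>j. g (l + j * p)) - 1)"
    unfolding err_def by (intro sums_diff sums_mult summable_sums summable block_sums)
  have err_le: "\<bar>err j\<bar> \<le> real p * block_var j" for j
  proof -
    have "err j = (\<Sum>i = j*p..<j*p+p. g (l + j * p) - g i)"
      unfolding err_def block_def by (simp add: sum_subtractf)
    also have "\<bar>\<dots>\<bar> \<le> (\<Sum>i = j*p..<j*p+p. \<bar>g (l + j * p) - g i\<bar>)" by (rule sum_abs)
    also have "\<dots> \<le> (\<Sum>i = j*p..<j*p+p. block_var j)"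
      unfolding block_var_def using \<open>l < p\<close>
      by (intro sum_mono abs_diff_le_block_variation) auto
    finally show ?thesis by simp
  qed
  have block_var_summable: "summable block_var" using block_var_sums sums_summable by blast
  have err_abs_summable: "summable (\<lambda>j. \<bar>err j\<bar>)"
    by (rule summable_comparison_test[of _ "\<lambda>j. real p * block_var j"])
      (use err_le block_var_summable in auto)
  have "real p * \<bar>(\<Sum>j. g (l + j * p)) - 1 / p\<bar> = \<bar>suminf err\<bar>"
  proof -
    have "real p * ((\<Sum>j. g (l + j * p)) - 1 / p) = suminf err"
      using err_sums \<open>p > 0\<close> by (simp add: sums_iff right_diff_distrib)
    then show ?thesis by (metis abs_mult abs_of_nat)
  qed
  also have "\<dots> \<le> (\<Sum>j. \<bar>err j\<bar>)" by (rule summable_rabs[OF err_abs_summable])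
  also have "\<dots> \<le> (\<Sum>j. real p * block_var j)"
    by (intro suminf_le err_le err_abs_summable summable_mult block_var_summable)
  also have "\<dots> = real p * (\<Sum>i. \<bar>g (Suc i) - g i\<bar>)"
    using block_var_sums by (simp add: suminf_mult sums_iff)
  also have "\<dots> \<le> real p * V" using var_le by (simp add: mult_left_mono)
  finally show "\<bar>(\<Sum>j. g (l + j * p)) - 1 / p\<bar> \<le> V" using \<open>p > 0\<close> by simp
qed

text \<open>The constant 5: one step at the start, the monotone ascent, two steps at the peak and
  the monotone descent each contribute at most B.\<close>
lemma unimodal_partial_variation_le:
  fixes g :: "nat \<Rightarrow> real" and a n :: nat
  assumes nonneg: "\<And>m. 0 \<le> g m" and bounded: "\<And>m. g m \<le> B"
    and mono_below: "\<And>i. 1 \<le> i \<Longrightarrow> i < a \<Longrightarrow> g i \<le> g (Suc i)"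
    and antimono_above: "\<And>i. a + 2 \<le> i \<Longrightarrow> g (Suc i) \<le> g i"
  shows "(\<Sum>i<n. \<bar>g (Suc i) - g i\<bar>) \<le> 5 * B"
proof -
  define D where "D i = \<bar>g (Suc i) - g i\<bar>" for i
  define a' where "a' = max a 1"
  define n' where "n' = max n (a' + 2)"
  have D_nonneg: "0 \<le> D i" for i unfolding D_def by simp
  have D_le: "D i \<le> B" for i
    unfolding D_def using nonneg[of i] nonneg[of "Suc i"] bounded[of i] bounded[of "Suc i"] by linarith
  have "(\<Sum>i<n. D i) \<le> (\<Sum>i<n'. D i)" by (rule sum_mono2) (use D_nonneg n'_def in auto)
  also have "\<dots> = D 0 + (\<Sum>i=1..<a'. D i) + (\<Sum>i=a'..<a'+2. D i) + (\<Sum>i=a'+2..<n'. D i)"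
  proof -
    have "1 \<le> a'" "a' + 2 \<le> n'" by (simp_all add: a'_def n'_def)
    then show ?thesis
      using sum.atLeastLessThan_concat[of 0 1 a' D] sum.atLeastLessThan_concat[of 0 a' "a'+2" D]
        sum.atLeastLessThan_concat[of 0 "a'+2" n' D]
      by (simp add: atLeast0LessThan)
  qed
  also have "(\<Sum>i=1..<a'. D i) = g a' - g 1"
  proof -
    have "(\<Sum>i=1..<a'. D i) = (\<Sum>i=1..<a'. g (Suc i) - g i)"
      by (rule sum.cong) (use mono_below in \<open>auto simp: D_def a'_def\<close>)
    then show ?thesis by (simp add: sum_Suc_diff' a'_def)
  qed
  also have "(\<Sum>i=a'+2..<n'. D i) = g (a'+2) - g n'"
  proof -
    have "(\<Sum>i=a'+2..<n'. D i) = (\<Sum>i=a'+2..<n'. g i - g (Suc i))"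
      by (rule sum.cong) (use antimono_above in \<open>auto simp: D_def a'_def\<close>)
    also have "\<dots> = - (\<Sum>i=a'+2..<n'. g (Suc i) - g i)" by (simp add: sum_negf[symmetric])
    also have "\<dots> = g (a'+2) - g n'" by (subst sum_Suc_diff') (simp_all add: n'_def)
    finally show ?thesis .
  qed
  also have "(\<Sum>i=a'..<a'+2. D i) \<le> 2 * B" using D_le[of a'] D_le[of "Suc a'"] by (simp add: numeral_2_eq_2)
  finally show ?thesis
    using D_le[of 0] nonneg bounded[of a'] bounded[of "a'+2"] nonneg[of 1] nonneg[of n']
    unfolding D_def by linarith
qed

lemma unimodal_variation_le:
  fixes g :: "nat \<Rightarrow> real" and a :: nat
  assumes "\<And>m. 0 \<le> g m" "\<And>m. g m \<le> B"
    and "\<And>i. 1 \<le> i \<Longrightarrow> i < a \<Longrightarrow> g i \<le> g (Suc i)"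
    and "\<And>i. a + 2 \<le> i \<Longrightarrow> g (Suc i) \<le> g i"
  shows "summable (\<lambda>i. \<bar>g (Suc i) - g i\<bar>)" and "(\<Sum>i. \<bar>g (Suc i) - g i\<bar>) \<le> 5 * B"
proof -
  note partial = unimodal_partial_variation_le[of g B a, OF assms]
  show summable: "summable (\<lambda>i. \<bar>g (Suc i) - g i\<bar>)"
    by (rule bounded_imp_summable[of _ "5 * B"])
      (use partial[of "Suc _"] in \<open>simp_all add: lessThan_Suc_atMost\<close>)
  show "(\<Sum>i. \<bar>g (Suc i) - g i\<bar>) \<le> 5 * B"
    by (rule suminf_le_const[OF summable partial])
qed

locale unimodal_cdf =
  fixes F f :: "real \<Rightarrow> real" and B x0 :: real
  assumes continuous: "continuous_on {0..} F"
    and has_deriv: "x > 0 \<Longrightarrow> (F has_real_derivative f x) (at x)"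
    and density_le: "x > 0 \<Longrightarrow> f x \<le> B"
    and mode_pos: "x0 > 0"
    and mono_below_mode: "0 < x \<Longrightarrow> x \<le> y \<Longrightarrow> y \<le> x0 \<Longrightarrow> f x \<le> f y"
    and antimono_above_mode: "x0 \<le> x \<Longrightarrow> x \<le> y \<Longrightarrow> f y \<le> f x"
begin

definition unit_increment :: "nat \<Rightarrow> real" where
  "unit_increment m = F (real m + 1) - F (real m)"

lemma increment_le:
  assumes "0 \<le> a" "a \<le> b"
  shows "F b - F a \<le> B * (b - a)"
proof (cases "a = b")
  case False
  then have "a < b" using assms by simp
  moreover have "continuous_on {a..b} F"
    by (rule continuous_on_subset[OF continuous]) (use assms in auto)
  moreover have "F differentiable (at x)" if "a < x" for x
    using has_deriv[of x] that assms real_differentiable_def by auto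
  ultimately obtain z where z: "a < z" "z < b" "F b - F a = (b - a) * f z"
    using MVT[of a b F] has_deriv DERIV_unique assms by (metis order.strict_trans1)
  then show ?thesis using density_le[of z] assms by (simp add: mult.commute mult_left_mono)
qed simp

lemma unit_increment_le: "unit_increment m \<le> B"
  using increment_le[of "real m" "real m + 1"] by (simp add: unit_increment_def)

lemma has_deriv_unit_increment:
  assumes "x > 0"
  shows "((\<lambda>x. F (x + 1) - F x) has_real_derivative f (x + 1) - f x) (at x)"
proof -
  have "((\<lambda>x. F (x + 1)) has_real_derivative f (x + 1)) (at x)"
    using has_deriv[of "x + 1"] assms by (simp add: DERIV_shift)
  then show ?thesis by (intro DERIV_diff has_deriv assms)
qed

lemma unit_increment_mono_below_mode:
  assumes "1 \<le> i" "real i + 2 \<le> x0"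
  shows "unit_increment i \<le> unit_increment (Suc i)"
proof -
  have "F (real i + 1) - F (real i) \<le> F (real i + 1 + 1) - F (real i + 1)"
  proof (rule DERIV_nonneg_imp_nondecreasing[where f = "\<lambda>x. F (x + 1) - F x"])
    fix x assume "real i \<le> x" "x \<le> real i + 1"
    then show "\<exists>y. ((\<lambda>x. F (x + 1) - F x) has_real_derivative y) (at x) \<and> 0 \<le> y"
      using assms has_deriv_unit_increment[of x] mono_below_mode[of x "x + 1"] by auto
  qed simp
  then show ?thesis by (simp add: unit_increment_def add.commute)
qed

lemma unit_increment_antimono_above_mode:
  assumes "x0 \<le> real i"
  shows "unit_increment (Suc i) \<le> unit_increment i"
proof -
  have "F (real i + 1 + 1) - F (real i + 1) \<le> F (real i + 1) - F (real i)"
  proof (rule DERIV_nonpos_imp_nonincreasing[where f = "\<lambda>x. F (x + 1) - F x"])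
    fix x assume "real i \<le> x" "x \<le> real i + 1"
    then show "\<exists>y. ((\<lambda>x. F (x + 1) - F x) has_real_derivative y) (at x) \<and> y \<le> 0"
      using assms mode_pos has_deriv_unit_increment[of x] antimono_above_mode[of x "x + 1"] by auto
  qed simp
  then show ?thesis by (simp add: unit_increment_def add.commute)
qed

end

context prob_space
begin

lemma prob_floor_eq:
  fixes X :: "'a \<Rightarrow> real"
  assumes [measurable]: "random_variable borel X"
  shows "prob {\<omega> \<in> space M. \<lfloor>X \<omega>\<rfloor> = int m}
    = prob {\<omega> \<in> space M. X \<omega> < real m + 1} - prob {\<omega> \<in> space M. X \<omega> < real m}"
proof -
  have "{\<omega> \<in> space M. \<lfloor>X \<omega>\<rfloor> = int m}
      = {\<omega> \<in> space M. X \<omega> < real m + 1} - {\<omega> \<in> space M. X \<omega> < real m}"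
    by (auto simp: floor_eq_iff)
  then show ?thesis by (simp add: finite_measure_Diff subset_eq)
qed

lemma prob_floor_mod_sums:
  fixes X :: "'a \<Rightarrow> real"
  assumes [measurable]: "random_variable borel X"
    and nonneg: "\<And>\<omega>. \<omega> \<in> space M \<Longrightarrow> 0 \<le> X \<omega>" and "l < p"
  shows "(\<lambda>j. prob {\<omega> \<in> space M. \<lfloor>X \<omega>\<rfloor> = int (l + j * p)})
    sums prob {\<omega> \<in> space M. \<lfloor>X \<omega>\<rfloor> mod int p = int l}"
proof -
  have [measurable]: "(\<lambda>\<omega>. \<lfloor>X \<omega>\<rfloor>) \<in> measurable M (count_space UNIV)"
    using measurable_compose[OF assms(1) measurable_real_floor] .
  define A where "A j = {\<omega> \<in> space M. \<lfloor>X \<omega>\<rfloor> = int (l + j * p)}" for j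
  have disjoint: "disjoint_family A"
    unfolding disjoint_family_on_def A_def using \<open>l < p\<close> by auto
  have "A j \<in> events" for j unfolding A_def by measurable
  then have events: "range A \<subseteq> events" by blast
  have union: "(\<Union>j. A j) = {\<omega> \<in> space M. \<lfloor>X \<omega>\<rfloor> mod int p = int l}"
  proof (intro set_eqI iffI)
    fix \<omega> assume "\<omega> \<in> {\<omega> \<in> space M. \<lfloor>X \<omega>\<rfloor> mod int p = int l}"
    then have "\<omega> \<in> space M" and mod: "\<lfloor>X \<omega>\<rfloor> mod int p = int l" by auto
    have "\<lfloor>X \<omega>\<rfloor> div int p \<ge> 0"
      using nonneg[OF \<open>\<omega> \<in> space M\<close>] \<open>l < p\<close> by (simp add: pos_imp_zdiv_nonneg_iff)
    then have "\<lfloor>X \<omega>\<rfloor> = int (l + nat (\<lfloor>X \<omega>\<rfloor> div int p) * p)"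
      using mod div_mult_mod_eq[of "\<lfloor>X \<omega>\<rfloor>" "int p"] by simp
    then show "\<omega> \<in> (\<Union>j. A j)" using \<open>\<omega> \<in> space M\<close> unfolding A_def by blast
  qed (use \<open>l < p\<close> in \<open>auto simp: A_def\<close>)
  show ?thesis using finite_measure_UNION[OF events disjoint] unfolding union by (simp add: A_def)
qed

theorem prob_floor_mod_deviation:
  fixes X :: "'a \<Rightarrow> real"
  assumes X: "random_variable borel X"
    and nonneg: "\<And>\<omega>. \<omega> \<in> space M \<Longrightarrow> 0 \<le> X \<omega>"
    and cdf: "unimodal_cdf (\<lambda>x. prob {\<omega> \<in> space M. X \<omega> < x}) f B x0"
    and "l < p"
  shows "\<bar>prob {\<omega> \<in> space M. \<lfloor>X \<omega>\<rfloor> mod int p = int l} - 1 / p\<bar> \<le> 5 * B"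
proof -
  interpret F: unimodal_cdf "\<lambda>x. prob {\<omega> \<in> space M. X \<omega> < x}" f B x0 by (rule cdf)
  let ?g = F.unit_increment
  have g_eq: "?g = (\<lambda>m. prob {\<omega> \<in> space M. \<lfloor>X \<omega>\<rfloor> = int m})"
    using prob_floor_eq[OF X] by (simp add: fun_eq_iff F.unit_increment_def)
  have g_sums: "?g sums 1"
    using prob_floor_mod_sums[OF X nonneg, of 0 1] by (simp add: g_eq prob_space)
  define a where "a = nat \<lfloor>x0\<rfloor> - 1"
  have mono: "?g i \<le> ?g (Suc i)" if "1 \<le> i" "i < a" for i
    using that F.unit_increment_mono_below_mode[of i] unfolding a_def by linarith
  have antimono: "?g (Suc i) \<le> ?g i" if "a + 2 \<le> i" for i
    using that F.mode_pos F.unit_increment_antimono_above_mode[of i] unfolding a_def by linarith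
  have g_nonneg: "0 \<le> ?g m" for m by (simp add: g_eq)
  note variation = unimodal_variation_le[of ?g B a, OF g_nonneg F.unit_increment_le mono antimono]
  have "(\<lambda>j. ?g (l + j * p)) sums prob {\<omega> \<in> space M. \<lfloor>X \<omega>\<rfloor> mod int p = int l}"
    using prob_floor_mod_sums[OF X nonneg \<open>l < p\<close>] by (simp add: g_eq)
  then show ?thesis
    using residue_class_suminf_deviation(2)[OF g_nonneg g_sums variation \<open>l < p\<close>]
    by (simp add: sums_iff)
qed

end

lemma prob_space_std_normal: "prob_space std_normal"
  unfolding std_normal_def by (rule prob_space_normal_density) simp

interpretation std_normal: prob_space std_normal
  by (rule prob_space_std_normal)

lemma sets_std_normal [simp, measurable_cong]: "sets std_normal = sets borel"
  unfolding std_normal_def by simp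

lemma space_std_normal [simp]: "space std_normal = UNIV"
  unfolding std_normal_def by simp

definition std_normal_cdf :: "real \<Rightarrow> real" where
  "std_normal_cdf t = measure std_normal {..<t}"

lemma std_normal_cdf_diff:
  assumes "a \<le> b"
  shows "std_normal_cdf b - std_normal_cdf a = (LBINT x=a..b. std_normal_density x)"
proof -
  have "{a..<b} = {..<b} - {..<a}" by auto
  then have "std_normal_cdf b - std_normal_cdf a = measure std_normal {a..<b}"
    using std_normal.finite_measure_Diff[of "{..<b}" "{..<a}"] assms by (simp add: std_normal_cdf_def)
  also have "\<dots> = integral\<^sup>L std_normal (indicator {a..<b})" by simp
  also have "\<dots> = integral\<^sup>L lborel (\<lambda>x. std_normal_density x *\<^sub>R indicator {a..<b} x)"
    unfolding std_normal_def by (rule integral_density) auto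
  also have "\<dots> = (LBINT x=a..b. std_normal_density x)"
    using assms by (simp add: interval_integral_Ico set_lebesgue_integral_def mult.commute)
  finally show ?thesis .
qed

lemma std_normal_cdf_eq: "std_normal_cdf u = std_normal_cdf 0 + (LBINT x=(0::real)..u. std_normal_density x)"
proof (cases "0 \<le> u")
  case False
  then show ?thesis
    using std_normal_cdf_diff[of u 0] interval_integral_endpoints_reverse[of 0 u std_normal_density]
    by (simp add: zero_ereal_def)
qed (use std_normal_cdf_diff[of 0 u] in \<open>simp add: zero_ereal_def\<close>)

lemma has_real_derivative_std_normal_cdf:
  "(std_normal_cdf has_real_derivative std_normal_density t) (at t)"
proof -
  let ?I = "{-\<bar>t\<bar>-1..\<bar>t\<bar>+1}"
  have cont: "continuous_on ?I std_normal_density"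
    unfolding std_normal_density_def by (intro continuous_intros) auto
  have "((\<lambda>u. LBINT x=(0::real)..u. std_normal_density x) has_vector_derivative std_normal_density t)
      (at t within ?I)"
    by (rule interval_integral_FTC2[OF _ _ cont]) auto
  then have "((\<lambda>u. std_normal_cdf 0 + (LBINT x=(0::real)..u. std_normal_density x))
      has_real_derivative std_normal_density t) (at t)"
    by (subst (asm) at_within_Icc_at) (auto intro!: derivative_eq_intros
        simp: has_real_derivative_iff_has_vector_derivative)
  then show ?thesis by (simp flip: std_normal_cdf_eq)
qed

lemma std_normal_cdf_at_bot: "(std_normal_cdf \<longlongrightarrow> 0) at_bot"
proof -
  interpret real_distribution std_normal
    by (simp add: real_distribution_def real_distribution_axioms_def prob_space_std_normal)
  show ?thesis
  proof (rule tendsto_sandwich[of "\<lambda>_. 0" _ _ "cdf std_normal"])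
    show "\<forall>\<^sub>F t in at_bot. std_normal_cdf t \<le> cdf std_normal t"
      unfolding std_normal_cdf_def cdf_def
      by (intro always_eventually allI std_normal.finite_measure_mono) auto
  qed (auto simp: std_normal_cdf_def cdf_lim_at_bot)
qed

context
  fixes c s :: real
begin

definition lognormal_cdf :: "real \<Rightarrow> real" where
  "lognormal_cdf x = measure std_normal {z. s * exp (c * z) < x}"

definition lognormal_inv :: "real \<Rightarrow> real" where
  "lognormal_inv x = (ln x - ln s) / c"

definition lognormal_density :: "real \<Rightarrow> real" where
  "lognormal_density x = std_normal_density (lognormal_inv x) / (c * x)"

context
  assumes c_pos: "c > 0" and s_pos: "s > 0"
begin

lemma exp_lognormal_inv:
  assumes "x > 0"
  shows "s * exp (c * lognormal_inv x) = x"
  using assms s_pos c_pos by (simp add: lognormal_inv_def exp_diff)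

lemma lognormal_less_iff:
  assumes "x > 0"
  shows "s * exp (c * z) < x \<longleftrightarrow> z < lognormal_inv x"
proof -
  have "s * exp (c * z) < x \<longleftrightarrow> exp (c * z) < exp (c * lognormal_inv x)"
    using exp_lognormal_inv[OF assms] s_pos by (metis mult_less_cancel_left_pos)
  also have "\<dots> \<longleftrightarrow> z < lognormal_inv x" using c_pos by simp
  finally show ?thesis .
qed

lemma lognormal_inv_mono: "0 < x \<Longrightarrow> x \<le> y \<Longrightarrow> lognormal_inv x \<le> lognormal_inv y"
  using c_pos by (simp add: lognormal_inv_def divide_right_mono)

lemma lognormal_inv_mode: "lognormal_inv (s * exp (- c\<^sup>2)) = - c"
  using s_pos c_pos by (simp add: lognormal_inv_def ln_mult power2_eq_square)

lemma lognormal_cdf_eq: "x > 0 \<Longrightarrow> lognormal_cdf x = std_normal_cdf (lognormal_inv x)"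
  by (simp add: lognormal_cdf_def std_normal_cdf_def lognormal_less_iff lessThan_def)

lemma lognormal_cdf_nonpos: "x \<le> 0 \<Longrightarrow> lognormal_cdf x = 0"
proof -
  assume "x \<le> 0"
  then have "{z. s * exp (c * z) < x} = {}" using s_pos by (auto simp: not_less intro: order.trans)
  then show ?thesis by (simp add: lognormal_cdf_def)
qed

lemma has_real_derivative_lognormal_cdf:
  assumes "x > 0"
  shows "(lognormal_cdf has_real_derivative lognormal_density x) (at x)"
proof -
  have "(lognormal_inv has_real_derivative 1 / (c * x)) (at x)"
    unfolding lognormal_inv_def[abs_def] using assms c_pos
    by (auto intro!: derivative_eq_intros simp: field_simps)
  from DERIV_chain2[OF has_real_derivative_std_normal_cdf this]
  have "((\<lambda>y. std_normal_cdf (lognormal_inv y)) has_real_derivative lognormal_density x) (at x)"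
    by (simp add: lognormal_density_def)
  then show ?thesis
    by (rule has_field_derivative_transform_within_open[where S = "{0<..}"])
      (use assms lognormal_cdf_eq in auto)
qed

lemma continuous_on_lognormal_cdf: "continuous_on {0..} lognormal_cdf"
proof -
  have "filterlim lognormal_inv at_bot (at_right 0)"
    unfolding lognormal_inv_def[abs_def] using c_pos by real_asymp
  then have "((\<lambda>x. std_normal_cdf (lognormal_inv x)) \<longlongrightarrow> 0) (at_right 0)"
    by (rule filterlim_compose[OF std_normal_cdf_at_bot])
  moreover have "\<forall>\<^sub>F x in at_right 0. std_normal_cdf (lognormal_inv x) = lognormal_cdf x"
    using eventually_at_right_less[of 0] by eventually_elim (simp add: lognormal_cdf_eq)
  ultimately have "(lognormal_cdf \<longlongrightarrow> lognormal_cdf 0) (at 0 within {0..})"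
    unfolding at_within_Ici_at_right lognormal_cdf_nonpos[OF order_refl]
    by (rule Lim_transform_eventually)
  moreover have "isCont lognormal_cdf x" if "x > 0" for x
    using has_real_derivative_lognormal_cdf[OF that] by (rule DERIV_isCont)
  ultimately show ?thesis
    unfolding continuous_on_eq_continuous_within continuous_within
    by (metis atLeast_iff continuous_at_imp_continuous_within continuous_within
        order.not_eq_order_implies_strict)
qed

lemma lognormal_density_eq:
  assumes "x > 0"
  shows "lognormal_density x = exp (c\<^sup>2 / 2 - (lognormal_inv x + c)\<^sup>2 / 2) / (sqrt (2 * pi) * c * s)"
proof -
  let ?u = "lognormal_inv x"
  have "lognormal_density x = std_normal_density ?u / (c * (s * exp (c * ?u)))"
    using exp_lognormal_inv[OF assms] by (simp add: lognormal_density_def)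
  moreover have "exp (c\<^sup>2 / 2 - (?u + c)\<^sup>2 / 2) = exp (- ?u\<^sup>2 / 2) / exp (c * ?u)"
    by (simp add: exp_diff[symmetric] power2_eq_square algebra_simps)
  ultimately show ?thesis by (simp add: std_normal_density_def)
qed

lemma unimodal_cdf_lognormal:
  "unimodal_cdf lognormal_cdf lognormal_density (exp (c\<^sup>2 / 2) / (sqrt (2 * pi) * c * s))
    (s * exp (- c\<^sup>2))"
proof
  fix x y :: real
  show "lognormal_density x \<le> exp (c\<^sup>2 / 2) / (sqrt (2 * pi) * c * s)" if "x > 0"
    using that c_pos s_pos by (simp add: lognormal_density_eq divide_right_mono)
  show "lognormal_density x \<le> lognormal_density y" if "0 < x" "x \<le> y" "y \<le> s * exp (- c\<^sup>2)"
  proof -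
    have "lognormal_inv y \<le> lognormal_inv (s * exp (- c\<^sup>2))"
      using that by (intro lognormal_inv_mono) auto
    then have "(- (lognormal_inv y + c))\<^sup>2 \<le> (- (lognormal_inv x + c))\<^sup>2"
      using that lognormal_inv_mono[of x y] by (intro power_mono) (auto simp: lognormal_inv_mode)
    then have "(lognormal_inv y + c)\<^sup>2 \<le> (lognormal_inv x + c)\<^sup>2" by (simp only: power2_minus)
    then show ?thesis using that c_pos s_pos by (simp add: lognormal_density_eq divide_right_mono)
  qed
  show "lognormal_density y \<le> lognormal_density x" if "s * exp (- c\<^sup>2) \<le> x" "x \<le> y"
  proof -
    have "0 < s * exp (- c\<^sup>2)" using s_pos by simp
    then have "0 < x" using that by linarith
    have "lognormal_inv (s * exp (- c\<^sup>2)) \<le> lognormal_inv x"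
      using \<open>0 < s * exp (- c\<^sup>2)\<close> that by (intro lognormal_inv_mono)
    then have "(lognormal_inv x + c)\<^sup>2 \<le> (lognormal_inv y + c)\<^sup>2"
      using that \<open>0 < x\<close> lognormal_inv_mono[of x y] by (intro power_mono) (auto simp: lognormal_inv_mode)
    then show ?thesis
      using that \<open>0 < x\<close> c_pos s_pos by (simp add: lognormal_density_eq divide_right_mono)
  qed
qed (use s_pos has_real_derivative_lognormal_cdf continuous_on_lognormal_cdf in auto)

end

end

lemma residue_prob_deviation:
  assumes "c > 0" "l < p"
  shows "\<bar>residue_prob c N p l - 1 / p\<bar> \<le> 5 * (exp (c\<^sup>2 / 2) / (sqrt (2 * pi) * c * 2 ^ N))"
proof -
  have measurable: "(\<lambda>z. 2 ^ N * exp (c * z)) \<in> borel_measurable std_normal"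
    unfolding measurable_cong_sets[OF sets_std_normal refl]
    by (intro borel_measurable_continuous_onI continuous_intros)
  have cdf: "unimodal_cdf (\<lambda>x. measure std_normal {z \<in> space std_normal. 2 ^ N * exp (c * z) < x})
      (lognormal_density c (2 ^ N)) (exp (c\<^sup>2 / 2) / (sqrt (2 * pi) * c * 2 ^ N)) (2 ^ N * exp (- c\<^sup>2))"
    using unimodal_cdf_lognormal[of c "2 ^ N"] assms(1) by (simp add: lognormal_cdf_def[abs_def])
  show ?thesis
    using std_normal.prob_floor_mod_deviation[OF measurable _ cdf \<open>l < p\<close>]
    by (simp add: residue_prob_def)
qed

lemma sqrt_div_two_pow_le:
  fixes n N :: nat and \<alpha> k \<epsilon> :: real
  assumes "\<alpha> > 0" "k > 0" "\<epsilon> > 0" "n \<ge> 1" "N > 0"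
    and lower: "(3*\<alpha> + 21*k/2 + 10 + \<epsilon>) * log 2 (real n) \<le> real N"
    and upper: "real N \<le> real n powr \<alpha>"
  shows "sqrt n / 2 ^ N \<le> 1 / (N * n powr (5*k+4))"
proof -
  define e where "e = 3*\<alpha> + 21*k/2 + 10 + \<epsilon>"
  have n: "real n \<ge> 1" using assms by simp
  have "sqrt n * N * n powr (5*k+4) \<le> n powr (1/2) * n powr \<alpha> * n powr (5*k+4)"
    using upper n by (simp add: powr_half_sqrt mult_left_mono)
  also have "\<dots> = n powr (1/2 + \<alpha> + (5*k+4))" by (simp only: powr_add)
  also have "\<dots> \<le> n powr e" using n assms by (intro powr_mono) (auto simp: e_def)
  also have "\<dots> = (2 powr log 2 n) powr e" using n by simp
  also have "\<dots> = 2 powr (e * log 2 n)" by (simp add: powr_powr mult.commute)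
  also have "\<dots> \<le> 2 ^ N" using lower by (simp add: e_def powr_realpow[symmetric])
  finally show ?thesis using assms by (simp add: field_simps)
qed

lemma exp_half_sq_div_le:
  fixes \<beta> c :: real and n :: nat
  assumes "\<beta> > 0" "n \<ge> 1" "c \<in> {\<beta> / sqrt n, 1}"
  shows "c > 0" and "exp (c\<^sup>2 / 2) / c \<le> exp ((max \<beta> 1)\<^sup>2 / 2) * (1 / \<beta> + 1) * sqrt n"
proof -
  have sqrt_n: "sqrt n \<ge> 1" using assms by simp
  then show "c > 0" using assms by auto
  have c_le: "c \<le> max \<beta> 1"
    using assms divide_left_mono[of 1 "sqrt n" \<beta>] sqrt_n by auto
  have inv_c: "1 / c \<le> (1 / \<beta> + 1) * sqrt n"
  proof (cases "c = 1")
    case True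
    have "sqrt n \<le> (1 / \<beta> + 1) * sqrt n" using assms by (simp add: algebra_simps)
    then show ?thesis using True order.trans[OF sqrt_n] by simp
  next
    case False
    then show ?thesis using assms by (simp add: algebra_simps)
  qed
  have exp_le: "exp (c\<^sup>2 / 2) \<le> exp ((max \<beta> 1)\<^sup>2 / 2)"
    using c_le \<open>c > 0\<close> by (simp add: power_mono)
  have "exp (c\<^sup>2 / 2) / c = exp (c\<^sup>2 / 2) * (1 / c)" by simp
  also have "\<dots> \<le> exp ((max \<beta> 1)\<^sup>2 / 2) * ((1 / \<beta> + 1) * sqrt n)"
    by (rule mult_mono[OF exp_le inv_c]) (use \<open>c > 0\<close> in auto)
  finally show "exp (c\<^sup>2 / 2) / c \<le> exp ((max \<beta> 1)\<^sup>2 / 2) * (1 / \<beta> + 1) * sqrt n"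
    by (simp only: mult.assoc)
qed

lemma residue_prob_deviation_asymptotic:
  fixes \<beta> k \<alpha> \<epsilon> c :: real and n N p l :: nat
  assumes "\<beta> > 0" "k > 0" "\<alpha> > 0" "\<epsilon> > 0" "n \<ge> 1" "N > 0"
    and "(3*\<alpha> + 21*k/2 + 10 + \<epsilon>) * log 2 (real n) \<le> real N" "real N \<le> real n powr \<alpha>"
    and "c \<in> {\<beta> / sqrt (real n), 1}" "l < p"
  shows "\<bar>residue_prob c N p l - 1 / p\<bar>
    \<le> 5 * (exp ((max \<beta> 1)\<^sup>2 / 2) * (1 / \<beta> + 1)) / sqrt (2 * pi) * (1 / (N * n powr (5*k+4)))"
proof -
  let ?E = "exp ((max \<beta> 1)\<^sup>2 / 2) * (1 / \<beta> + 1)"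
  have "?E > 0" using assms(1) by (intro mult_pos_pos add_pos_pos) auto
  have "c > 0" and c_factor: "exp (c\<^sup>2 / 2) / c \<le> ?E * sqrt n"
    using exp_half_sq_div_le[OF assms(1,5,9)] by simp_all
  have "\<bar>residue_prob c N p l - 1 / p\<bar> \<le> 5 * (exp (c\<^sup>2 / 2) / (sqrt (2 * pi) * c * 2 ^ N))"
    by (rule residue_prob_deviation[OF \<open>c > 0\<close> \<open>l < p\<close>])
  also have "\<dots> = 5 / sqrt (2 * pi) * (exp (c\<^sup>2 / 2) / c) * (1 / 2 ^ N)" by simp
  also have "\<dots> \<le> 5 / sqrt (2 * pi) * (?E * sqrt n) * (1 / 2 ^ N)"
    by (rule mult_right_mono[OF mult_left_mono[OF c_factor]]) auto
  also have "\<dots> = 5 * ?E / sqrt (2 * pi) * (sqrt n / 2 ^ N)" by simp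
  also have "\<dots> \<le> 5 * ?E / sqrt (2 * pi) * (1 / (N * n powr (5*k+4)))"
    using \<open>?E > 0\<close> by (intro mult_left_mono sqrt_div_two_pow_le[OF assms(3,2,4-8)]) simp
  finally show ?thesis .
qed

theorem lemma9:
  fixes \<beta> k \<alpha> \<epsilon> :: real
  assumes "\<beta> > 0" "k > 0" "\<alpha> > 0" "\<epsilon> > 0"
  shows "\<exists>C::real. \<exists>n0::nat. \<forall>n\<ge>n0. \<forall>N::nat. \<forall>p::nat.
           N > 0
           \<and> (3*\<alpha> + 21*k/2 + 10 + \<epsilon>) * log 2 (real n) \<le> real N
           \<and> real N \<le> real n powr \<alpha>
           \<and> prime p
           \<and> 9 * real n powr (2*k+2) \<le> real p
           \<and> real p \<le> 2 * (2 + \<alpha> + 2*k) * real N * real n powr (2*k+2) * log 2 (real n)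
           \<longrightarrow> (\<forall>c \<in> {\<beta> / sqrt (real n), 1}. \<forall>l < p.
                 \<bar>residue_prob c N p l - 1 / real p\<bar>
                   \<le> C * (1 / (real N * real n powr (5*k+4))))"
  by (intro exI[of _ "5 * (exp ((max \<beta> 1)\<^sup>2 / 2) * (1 / \<beta> + 1)) / sqrt (2 * pi)"]
      exI[of _ "1::nat"] allI impI ballI, elim conjE)
    (rule residue_prob_deviation_asymptotic[OF assms], assumption+)

end
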